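(* Let $\alpha>1$, $d\in\mathbb N$, $1\ge\gamma_1\ge\dots\ge\gamma_d>0$, $g\in\mathcal A_{\alpha,\boldsymbol\gamma,d}$, $\boldsymbol x_1,\dots,\boldsymbol x_N\in[0,1]^d$, $c_1,\dots,c_N\in\mathbb R$, and $\varepsilon>0$. Then there exist $\delta\in(0,\alpha-1)$ and $\sigma>0$ such that: if for each prime $L$, $\mathcal Z_L$ is a rank-1 lattice point set of size $L$ with $e(H_{\beta,\boldsymbol\gamma,d},\mathcal Z_L)\le C_{\boldsymbol\gamma,d}(\beta,\tau)L^{-\beta+\tau}$ for all $\tau\in(0,\beta-\frac12]$, where $\beta=\alpha-\frac12-\delta$, and $m_L=\lceil(\alpha-\frac12-\sigma)\log_2(L)+\frac{d-1}2\rceil$, then with $K=Q^\alpha_{m_L,\boldsymbol\gamma,d}$ and $\mathcal Z=\mathcal Z_L$, $$\mathrm{err}_1(g,\mathcal C)+\mathrm{err}_2(g,\mathcal C)\lesssim L^{-(\alpha-\frac12)/2+\varepsilon},$$ with an implicit constant independent of $L$.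
   Context: $r_\beta(\gamma,h)=\max(|h|^{2\beta}/\gamma,1)$, $r_\beta(\boldsymbol\gamma,\boldsymbol k)=\prod_jr_\beta(\gamma_j,k_j)$; $\omega_{\boldsymbol k}(\boldsymbol x)=\exp(2\pi i\,\boldsymbol k\cdot\boldsymbol x)$, $\widehat f_{\boldsymbol k}=\int_{[0,1]^d}f\,\overline{\omega_{\boldsymbol k}}$. $\mathcal A_{\alpha,\boldsymbol\gamma,d}=\{f\in L_1([0,1]^d):\sum_{\boldsymbol k}\sqrt{r_\alpha(\boldsymbol\gamma,\boldsymbol k)}|\widehat f_{\boldsymbol k}|<\infty\}$; $H_{\beta,\boldsymbol\gamma,d}=\{f\in L_2:\sum_{\boldsymbol k}r_\beta(\boldsymbol\gamma,\boldsymbol k)|\widehat f_{\boldsymbol k}|^2<\infty\}$ with norm the square root of this sum. $Q^\alpha_{m,\boldsymbol\gamma,d}=\bigcup_{\boldsymbol t\in\mathbb N_0^d,\|\boldsymbol t\|_1=m}\{\boldsymbol k\in\mathbb Z^d:r_\alpha(\gamma_j,k_j)\le2^{t_j}\ \forall j\}$. $\phi_K(\boldsymbol x)=\sum_{\boldsymbol k\in K}\check\phi_{\boldsymbol k}\overline{\omega_{\boldsymbol k}(\boldsymbol x)}$, $\check\phi_{\boldsymbol k}=\frac1N\sum_nc_n\omega_{\boldsymbol k}(\boldsymbol x_n)$; $\mathrm{err}_1(g,\mathcal C)=|\frac1N\sum_nc_ng(\boldsymbol x_n)-\int g\phi_K|$, $\mathrm{err}_2(g,\mathcal C)=|\int g\phi_K-\frac1L\sum_\ell(g\phi_K)(\boldsymbol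 z_\ell)|$, $\mathcal Z=\{\boldsymbol z_\ell\}$. Rank-1 lattice: $\{(\ell\mathfrak g/L)\bmod1\}_{\ell=0}^{L-1}$, $\mathfrak g\in\{1,\dots,L-1\}^d$. $e(H_{\beta,\boldsymbol\gamma,d},\mathcal Z)=\sup_{\|f\|\le1}|\int f-\frac1L\sum_\ell f(\boldsymbol z_\ell)|$. $C_{\boldsymbol\gamma,d}(\beta,\tau)=2^{\beta-\tau}\prod_j[1+2\gamma_j^{1/(2(\beta-\tau))}\zeta(\frac\beta{\beta-\tau})]^{\beta-\tau}$, $\zeta$ Riemann zeta. *)

theory Defs
  imports "HOL-Analysis.Analysis" "HOL-Computational_Algebra.Primes"
begin

text \<open>Dimension d = CARD('d); coordinates indexed by a finite linearly ordered type.
  Points of [0,1]^d are vectors in real^'d, frequencies are in int^'d.\<close>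

definition rzeta :: "real \<Rightarrow> real" where
  "rzeta s = (\<Sum>n. 1 / (real (Suc n)) powr s)"

definition r1 :: "real \<Rightarrow> real \<Rightarrow> int \<Rightarrow> real" where
  "r1 \<beta> \<gamma> h = max (\<bar>real_of_int h\<bar> powr (2 * \<beta>) / \<gamma>) 1"

definition rw :: "real \<Rightarrow> ('d::finite \<Rightarrow> real) \<Rightarrow> int^'d \<Rightarrow> real" where
  "rw \<beta> \<gamma> k = (\<Prod>j\<in>UNIV. r1 \<beta> (\<gamma> j) (k $ j))"

definition omega :: "int^'d::finite \<Rightarrow> real^'d \<Rightarrow> complex" where
  "omega k x = exp (2 * of_real pi * \<i> * of_real (\<Sum>j\<in>UNIV. of_int (k $ j) * x $ j))"

definition fcoef :: "(real^'d::finite \<Rightarrow> complex) \<Rightarrow> int^'d \<Rightarrow> complex" where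
  "fcoef f k = integral (cbox 0 One) (\<lambda>x. f x * cnj (omega k x))"

text \<open>Point evaluation is that of the representative given by the (absolutely
  convergent) Fourier series.\<close>
definition fourier_rep :: "(real^'d::finite \<Rightarrow> complex) \<Rightarrow> bool" where
  "fourier_rep f \<longleftrightarrow> (\<forall>x\<in>cbox 0 One. f x = infsum (\<lambda>k. fcoef f k * omega k x) UNIV)"

definition in_A :: "real \<Rightarrow> ('d::finite \<Rightarrow> real) \<Rightarrow> (real^'d \<Rightarrow> complex) \<Rightarrow> bool" where
  "in_A \<alpha> \<gamma> f \<longleftrightarrow> f absolutely_integrable_on cbox 0 One \<and>
     (\<lambda>k. sqrt (rw \<alpha> \<gamma> k) * cmod (fcoef f k)) summable_on UNIV"

definition H_unit_ball :: "real \<Rightarrow> ('d::finite \<Rightarrow> real) \<Rightarrow> (real^'d \<Rightarrow> complex) set" where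
  "H_unit_ball \<beta> \<gamma> = {f. f absolutely_integrable_on cbox 0 One \<and>
     (\<lambda>x. (cmod (f x))\<^sup>2) integrable_on cbox 0 One \<and>
     (\<lambda>k. rw \<beta> \<gamma> k * (cmod (fcoef f k))\<^sup>2) summable_on UNIV \<and>
     infsum (\<lambda>k. rw \<beta> \<gamma> k * (cmod (fcoef f k))\<^sup>2) UNIV \<le> 1 \<and>
     fourier_rep f}"

definition wce :: "real \<Rightarrow> ('d::finite \<Rightarrow> real) \<Rightarrow> (nat \<Rightarrow> real^'d) \<Rightarrow> nat \<Rightarrow> ereal" where
  "wce \<beta> \<gamma> z L = (SUP f\<in>H_unit_ball \<beta> \<gamma>.
      ereal (cmod (integral (cbox 0 One) f - (1 / real L) * (\<Sum>l<L. f (z l)))))"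

definition rank1_lattice :: "nat \<Rightarrow> nat^'d::finite \<Rightarrow> nat \<Rightarrow> real^'d" where
  "rank1_lattice L gv l = (\<chi> j. frac (real l * real (gv $ j) / real L))"

definition Cconst :: "('d::finite \<Rightarrow> real) \<Rightarrow> real \<Rightarrow> real \<Rightarrow> real" where
  "Cconst \<gamma> \<beta> \<tau> = 2 powr (\<beta> - \<tau>) *
     (\<Prod>j\<in>UNIV. (1 + 2 * \<gamma> j powr (1 / (2 * (\<beta> - \<tau>))) * rzeta (\<beta> / (\<beta> - \<tau>))) powr (\<beta> - \<tau>))"

definition Qset :: "real \<Rightarrow> ('d::finite \<Rightarrow> real) \<Rightarrow> int \<Rightarrow> (int^'d) set" where
  "Qset \<alpha> \<gamma> m = (\<Union>t\<in>{t :: nat^'d. int (\<Sum>j\<in>UNIV. t $ j) = m}.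
      {k. \<forall>j. r1 \<alpha> (\<gamma> j) (k $ j) \<le> 2 ^ (t $ j)})"

definition phiK :: "(int^'d::finite) set \<Rightarrow> nat \<Rightarrow> (nat \<Rightarrow> real^'d) \<Rightarrow> (nat \<Rightarrow> real) \<Rightarrow> real^'d \<Rightarrow> complex" where
  "phiK K N x c y = (\<Sum>k\<in>K. ((1 / of_nat N) * (\<Sum>n<N. of_real (c n) * omega k (x n))) * cnj (omega k y))"

definition err1 :: "(real^'d::finite \<Rightarrow> complex) \<Rightarrow> nat \<Rightarrow> (nat \<Rightarrow> real^'d) \<Rightarrow> (nat \<Rightarrow> real) \<Rightarrow> (int^'d) set \<Rightarrow> real" where
  "err1 g N x c K = cmod ((1 / of_nat N) * (\<Sum>n<N. of_real (c n) * g (x n))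
      - integral (cbox 0 One) (\<lambda>y. g y * phiK K N x c y))"

definition err2 :: "(real^'d::finite \<Rightarrow> complex) \<Rightarrow> nat \<Rightarrow> (nat \<Rightarrow> real^'d) \<Rightarrow> (nat \<Rightarrow> real) \<Rightarrow> (int^'d) set
    \<Rightarrow> (nat \<Rightarrow> real^'d) \<Rightarrow> nat \<Rightarrow> real" where
  "err2 g N x c K z L = cmod (integral (cbox 0 One) (\<lambda>y. g y * phiK K N x c y)
      - (1 / of_nat L) * (\<Sum>l<L. g (z l) * phiK K N x c (z l)))"

end

theory Submission
  imports Defs
begin

text \<open>
  Put p k = (1/N) \<Sum>n. c n * omega k (x n); then phiK = (\<Sum>k\<in>K. p k * cnj (omega k)) and
  |p k| \<le> S = (1/N) \<Sum>n. |c n|. Since g is the sum of its absolutely convergent Fourier series,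
  err1 is the tail (\<Sum>k\<notin>K. fcoef g k * p k), which is at most S * A_norm / sqrt T when
  rw \<alpha> \<ge> T outside K; outside the hyperbolic cross Q m one has rw \<alpha> \<ge> 2^(m - d).
  The product g * phiK has the Fourier coefficients (\<Sum>k\<in>K. p k * fcoef g (h + k)). A
  Peetre-type inequality rw \<beta> h \<le> c * rw \<beta> (h + k) * rw \<beta> k and Cauchy-Schwarz bound its
  squared H-norm by c * A_norm^2 * S^2 * (\<Sum>k\<in>K. rw \<beta> k); normalising g * phiK into the unit
  ball of H, err2 is at most that norm times the worst-case error of the lattice rule.
  Counting the hyperbolic cross gives (\<Sum>k\<in>Q m. rw \<beta> k) \<le> C (m+1)^d 2^m. For
  2^m \<approx> L^(\<alpha> - 1/2 - \<sigma>) both errors are O(L^(-(\<alpha> - 1/2)/2 + \<epsilon>)) as soon as \<delta>, \<sigma>, \<tau>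
  and the logarithmic loss from (m+1)^d are small compared with \<epsilon>.
\<close>

lemma has_sum_sum:
  fixes f :: "'i \<Rightarrow> 'a \<Rightarrow> 'b::topological_comm_monoid_add"
  assumes "finite K" "\<And>k. k \<in> K \<Longrightarrow> (f k has_sum s k) A"
  shows "((\<lambda>x. \<Sum>k\<in>K. f k x) has_sum (\<Sum>k\<in>K. s k)) A"
  using assms by (induction K rule: finite_induct) (auto intro: has_sum_add)

lemma summable_on_sum:
  fixes f :: "'i \<Rightarrow> 'a \<Rightarrow> 'b::topological_comm_monoid_add"
  assumes "finite K" "\<And>k. k \<in> K \<Longrightarrow> f k summable_on A"
  shows "(\<lambda>x. \<Sum>k\<in>K. f k x) summable_on A"
  using assms by (induction K rule: finite_induct) (auto intro: summable_on_add)

lemma infsum_sum: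
  fixes f :: "'i \<Rightarrow> 'a \<Rightarrow> 'b::{topological_comm_monoid_add,t2_space}"
  assumes "finite K" "\<And>k. k \<in> K \<Longrightarrow> f k summable_on A"
  shows "infsum (\<lambda>x. \<Sum>k\<in>K. f k x) A = (\<Sum>k\<in>K. infsum (f k) A)"
  using has_sum_sum[where f=f and s="\<lambda>k. infsum (f k) A" and A=A] assms by (simp add: infsumI)

lemma summable_on_translate:
  fixes f :: "'a::ab_group_add \<Rightarrow> 'b::topological_comm_monoid_add"
  assumes "f summable_on UNIV"
  shows "(\<lambda>h. f (h + k)) summable_on UNIV"
  using summable_on_reindex_bij_betw[of "\<lambda>h. h + k" UNIV UNIV f] assms
  by (simp add: bij_plus_right bij_betw_def)

lemma infsum_translate:
  fixes f :: "'a::ab_group_add \<Rightarrow> 'b::{topological_comm_monoid_add,t2_space}"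
  shows "infsum (\<lambda>h. f (h + k)) UNIV = infsum f UNIV"
  using infsum_reindex_bij_betw[of "\<lambda>h. h + k" UNIV UNIV f]
  by (simp add: bij_plus_right bij_betw_def)

lemma absolutely_integrable_mult_continuous:
  fixes g :: "'a::euclidean_space \<Rightarrow> complex"
  assumes "g absolutely_integrable_on cbox a b" "continuous_on (cbox a b) p"
  shows "(\<lambda>x. g x * p x) absolutely_integrable_on cbox a b"
proof -
  have "(\<lambda>x. p x * g x) absolutely_integrable_on cbox a b"
  proof (rule absolutely_integrable_bounded_measurable_product[OF bilinear_times])
    show "p \<in> borel_measurable (lebesgue_on (cbox a b))"
      using assms(2) by (intro continuous_imp_measurable_on_sets_lebesgue) auto
    show "bounded (p ` cbox a b)"
      using assms(2) by (intro compact_imp_bounded compact_continuous_image) auto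
  qed (use assms in auto)
  then show ?thesis
    by (simp add: mult.commute)
qed

lemma weighted_Cauchy_Schwarz:
  fixes a b :: "'i \<Rightarrow> real"
  assumes "\<And>k. k \<in> K \<Longrightarrow> 0 \<le> b k"
  shows "(\<Sum>k\<in>K. a k * b k)\<^sup>2 \<le> (\<Sum>k\<in>K. (a k)\<^sup>2 * b k) * (\<Sum>k\<in>K. b k)"
proof -
  have "(\<Sum>k\<in>K. a k * b k) = (\<Sum>k\<in>K. (a k * sqrt (b k)) * sqrt (b k))"
    using assms by (intro sum.cong refl) (simp add: mult.assoc)
  also have "(\<dots>)\<^sup>2 \<le> (\<Sum>k\<in>K. (a k * sqrt (b k))\<^sup>2) * (\<Sum>k\<in>K. (sqrt (b k))\<^sup>2)"
    by (rule Cauchy_Schwarz_ineq_sum)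
  also have "\<dots> = (\<Sum>k\<in>K. (a k)\<^sup>2 * b k) * (\<Sum>k\<in>K. b k)"
    using assms by (simp add: power_mult_distrib)
  finally show ?thesis .
qed

section \<open>Characters and weights\<close>

lemma omega_add: "omega (k + h) x = omega k x * omega h x"
  unfolding omega_def by (simp add: distrib_right distrib_left sum.distrib flip: exp_add)

lemma cnj_omega: "cnj (omega k x) = omega (-k) x"
  unfolding omega_def by (simp add: exp_cnj sum_negf)

lemma norm_omega [simp]: "cmod (omega k x) = 1"
  unfolding omega_def by (simp add: norm_exp_eq_Re)

lemma omega_0 [simp]: "omega 0 x = 1"
  unfolding omega_def by simp

lemma continuous_on_omega [continuous_intros]: "continuous_on S (omega k)"
  unfolding omega_def by (intro continuous_intros)

lemma r1_ge_1: "1 \<le> r1 \<beta> \<gamma> h"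
  unfolding r1_def by simp

lemma r1_mono_exponent:
  assumes "0 < \<beta>" "\<beta> \<le> \<alpha>" "0 < \<gamma>"
  shows "r1 \<beta> \<gamma> h \<le> r1 \<alpha> \<gamma> h"
proof (cases "h = 0")
  case False
  then have "\<bar>real_of_int h\<bar> powr (2*\<beta>) \<le> \<bar>real_of_int h\<bar> powr (2*\<alpha>)"
    using assms by (intro powr_mono) auto
  then show ?thesis
    unfolding r1_def using assms by (intro max.mono divide_right_mono) auto
qed (simp add: r1_def)

lemma r1_le_shift:
  assumes "0 < \<beta>" "0 < \<gamma>"
  shows "r1 \<beta> \<gamma> h \<le> 2 powr (2*\<beta>+1) * r1 \<beta> \<gamma> (h+k) * r1 \<beta> \<gamma> k"
proof -
  define u v where "u = \<bar>real_of_int (h+k)\<bar>" and "v = \<bar>real_of_int k\<bar>"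
  define R1 R2 where "R1 = r1 \<beta> \<gamma> (h+k)" and "R2 = r1 \<beta> \<gamma> k"
  have R: "u powr (2*\<beta>) / \<gamma> \<le> R1" "v powr (2*\<beta>) / \<gamma> \<le> R2" "1 \<le> R1" "1 \<le> R2"
    unfolding u_def v_def R1_def R2_def r1_def by auto
  have "\<bar>real_of_int h\<bar> \<le> u + v"
    unfolding u_def v_def by linarith
  also have "\<dots> \<le> 2 * max u v"
    by simp
  finally have "\<bar>real_of_int h\<bar> powr (2*\<beta>) \<le> (2 * max u v) powr (2*\<beta>)"
    using assms by (intro powr_mono2) auto
  also have "\<dots> = 2 powr (2*\<beta>) * max u v powr (2*\<beta>)"
    unfolding u_def v_def by (simp add: powr_mult)
  also have "\<dots> \<le> 2 powr (2*\<beta>) * (u powr (2*\<beta>) + v powr (2*\<beta>))"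
    by (intro mult_left_mono) (auto simp: max_def)
  finally have "\<bar>real_of_int h\<bar> powr (2*\<beta>) / \<gamma> \<le> 2 powr (2*\<beta>) * (u powr (2*\<beta>) / \<gamma> + v powr (2*\<beta>) / \<gamma>)"
    using assms by (simp add: divide_right_mono add_divide_distrib[symmetric])
  also have "\<dots> \<le> 2 powr (2*\<beta>) * (R1 + R2)"
    using R by (intro mult_left_mono) auto
  also have "R1 + R2 \<le> 2 * R1 * R2"
    using mult_mono[OF R(3,4)] mult_nonneg_nonneg[of "R1 - 1" "R2 - 1"] R by (simp add: algebra_simps)
  finally have "\<bar>real_of_int h\<bar> powr (2*\<beta>) / \<gamma> \<le> 2 powr (2*\<beta>+1) * R1 * R2"
    by (simp add: powr_add mult_ac)
  moreover have "1 \<le> 2 powr (2*\<beta>+1) * R1 * R2"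
  proof -
    have "1 \<le> 2 powr (2*\<beta>+1)"
      using assms by (intro ge_one_powr_ge_zero) auto
    then show ?thesis
      using R(3,4) by (metis mult_mono' mult.assoc mult_1 zero_le_one)
  qed
  ultimately show ?thesis
    unfolding r1_def R1_def R2_def by simp
qed

lemma rw_ge_1: "1 \<le> rw \<beta> \<gamma> k"
  unfolding rw_def by (intro prod_ge_1) (auto simp: r1_ge_1)

lemma rw_pos: "0 < rw \<beta> \<gamma> k"
  using rw_ge_1[of \<beta> \<gamma> k] by linarith

lemma rw_mono_exponent:
  assumes "0 < \<beta>" "\<beta> \<le> \<alpha>" "\<forall>j. 0 < \<gamma> j"
  shows "rw \<beta> \<gamma> k \<le> rw \<alpha> \<gamma> k"
  unfolding rw_def using assms
  by (intro prod_mono) (auto simp: r1_mono_exponent order.trans[OF zero_le_one r1_ge_1])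

lemma rw_le_shift:
  fixes h k :: "int^'d::finite"
  assumes "0 < \<beta>" "\<forall>j. 0 < \<gamma> j"
  shows "rw \<beta> \<gamma> h \<le> (2 powr (2*\<beta>+1)) ^ CARD('d) * rw \<beta> \<gamma> (h+k) * rw \<beta> \<gamma> k"
proof -
  have "rw \<beta> \<gamma> h \<le> (\<Prod>j\<in>UNIV. 2 powr (2*\<beta>+1) * r1 \<beta> (\<gamma> j) ((h+k)$j) * r1 \<beta> (\<gamma> j) (k$j))"
    unfolding rw_def using assms
    by (intro prod_mono) (auto simp: order.trans[OF zero_le_one r1_ge_1] intro: r1_le_shift)
  also have "\<dots> = (2 powr (2*\<beta>+1)) ^ CARD('d) * rw \<beta> \<gamma> (h+k) * rw \<beta> \<gamma> k"
    unfolding rw_def by (simp add: prod.distrib)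
  finally show ?thesis .
qed

lemma sqrt_rw_le_shift:
  fixes h k :: "int^'d::finite"
  assumes "0 < \<beta>" "\<beta> \<le> \<alpha>" "\<forall>j. 0 < \<gamma> j"
  shows "sqrt (rw \<beta> \<gamma> h) \<le> sqrt ((2 powr (2*\<beta>+1)) ^ CARD('d) * rw \<beta> \<gamma> k) * sqrt (rw \<alpha> \<gamma> (h+k))"
proof -
  have "rw \<beta> \<gamma> h \<le> (2 powr (2*\<beta>+1)) ^ CARD('d) * rw \<beta> \<gamma> (h+k) * rw \<beta> \<gamma> k"
    using rw_le_shift[OF assms(1,3)] by blast
  also have "\<dots> \<le> (2 powr (2*\<beta>+1)) ^ CARD('d) * rw \<alpha> \<gamma> (h+k) * rw \<beta> \<gamma> k"
    using rw_mono_exponent[OF assms] rw_pos[of \<beta> \<gamma> k] by (intro mult_right_mono mult_left_mono) auto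
  finally show ?thesis
    by (simp add: real_sqrt_mult[symmetric] mult_ac)
qed

section \<open>Products of a function in A with trigonometric polynomials\<close>

locale weighted_wiener =
  fixes \<alpha> :: real and \<gamma> :: "'d::finite \<Rightarrow> real" and g :: "real^'d \<Rightarrow> complex"
  assumes \<gamma>_pos: "\<forall>j. 0 < \<gamma> j" and in_A: "in_A \<alpha> \<gamma> g" and fourier_rep: "fourier_rep g"
begin

definition wcoef :: "int^'d \<Rightarrow> real" where
  "wcoef k = sqrt (rw \<alpha> \<gamma> k) * cmod (fcoef g k)"

definition A_norm :: real where
  "A_norm = infsum wcoef UNIV"

lemma absolutely_integrable: "g absolutely_integrable_on cbox 0 One"
  using in_A unfolding in_A_def by auto

lemma wcoef_summable: "wcoef summable_on UNIV"
  using in_A unfolding in_A_def wcoef_def by auto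

lemma wcoef_nonneg: "0 \<le> wcoef k"
  unfolding wcoef_def using rw_pos[of \<alpha> \<gamma> k] by simp

lemma A_norm_nonneg: "0 \<le> A_norm"
  unfolding A_norm_def by (intro infsum_nonneg wcoef_nonneg)

lemma norm_fcoef_le_wcoef: "cmod (fcoef g k) \<le> wcoef k"
  unfolding wcoef_def using rw_ge_1[of \<alpha> \<gamma> k] by (simp add: mult_le_cancel_right1)

lemma norm_fcoef_summable: "(\<lambda>k. cmod (fcoef g k)) summable_on UNIV"
  by (rule summable_on_comparison_test[OF wcoef_summable]) (auto simp: norm_fcoef_le_wcoef)

lemma summable_on_fcoef_mult_bounded:
  assumes "\<And>k. cmod (u k) \<le> C"
  shows "(\<lambda>k. fcoef g k * u k) summable_on UNIV"
proof (rule abs_summable_summable)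
  have "(\<lambda>k. cmod (fcoef g k) * C) summable_on UNIV"
    by (intro summable_on_cmult_left norm_fcoef_summable)
  then show "(\<lambda>k. norm (fcoef g k * u k)) summable_on UNIV"
    by (rule summable_on_comparison_test) (auto simp: norm_mult intro: mult_left_mono assms)
qed

lemma fourier_series_summable: "(\<lambda>k. fcoef g k * omega k x) summable_on UNIV"
  by (rule summable_on_fcoef_mult_bounded[of _ 1]) simp

lemma norm_le_infsum_norm_fcoef:
  assumes "x \<in> cbox 0 One"
  shows "cmod (g x) \<le> infsum (\<lambda>k. cmod (fcoef g k)) UNIV"
proof -
  have "g x = infsum (\<lambda>k. fcoef g k * omega k x) UNIV"
    using fourier_rep assms unfolding fourier_rep_def by auto
  also have "cmod \<dots> \<le> infsum (\<lambda>k. cmod (fcoef g k * omega k x)) UNIV"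
    by (rule norm_infsum_bound) (simp add: norm_mult norm_fcoef_summable)
  finally show ?thesis
    by (simp add: norm_mult)
qed

lemma fcoef_mult_trig_poly:
  assumes "finite K"
  shows "fcoef (\<lambda>y. g y * (\<Sum>k\<in>K. q k * cnj (omega k y))) h = (\<Sum>k\<in>K. q k * fcoef g (h+k))"
proof -
  have "g y * (\<Sum>k\<in>K. q k * cnj (omega k y)) * cnj (omega h y)
        = (\<Sum>k\<in>K. q k * (g y * cnj (omega (h+k) y)))" for y
    by (simp add: sum_distrib_left sum_distrib_right omega_add mult_ac)
  moreover have "(\<lambda>y. q k * (g y * cnj (omega (h+k) y))) integrable_on cbox 0 One" for k
    using absolutely_integrable_mult_continuous[OF absolutely_integrable, of "\<lambda>y. cnj (omega (h+k) y)"]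
    by (intro integrable_on_mult_right)
      (auto simp: absolutely_integrable_on_def intro: continuous_intros)
  ultimately show ?thesis
    unfolding fcoef_def using assms by (simp add: integral_sum)
qed

lemma integral_mult_trig_poly:
  assumes "finite K"
  shows "integral (cbox 0 One) (\<lambda>y. g y * (\<Sum>k\<in>K. q k * cnj (omega k y))) = (\<Sum>k\<in>K. q k * fcoef g k)"
  using fcoef_mult_trig_poly[OF assms, of q 0] unfolding fcoef_def by simp

lemma fourier_rep_mult_trig_poly:
  assumes "finite K"
  shows "fourier_rep (\<lambda>y. g y * (\<Sum>k\<in>K. q k * cnj (omega k y)))"
  unfolding fourier_rep_def fcoef_mult_trig_poly[OF assms]
proof
  fix x :: "real^'d"
  assume x: "x \<in> cbox 0 One"
  have shifted: "infsum (\<lambda>h. fcoef g (h+k) * omega h x) UNIV = g x * cnj (omega k x)" for k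
  proof -
    have factor: "fcoef g (h+k) * omega h x = fcoef g (h+k) * omega (h+k) x * cnj (omega k x)" for h
      using omega_add[of "h+k" "-k" x] by (simp add: cnj_omega mult_ac)
    have "infsum (\<lambda>h. fcoef g (h+k) * omega h x) UNIV
        = infsum (\<lambda>h. fcoef g (h+k) * omega (h+k) x) UNIV * cnj (omega k x)"
      unfolding factor
      by (intro infsum_cmult_left summable_on_translate[where f="\<lambda>h. fcoef g h * omega h x"]
          fourier_series_summable)
    also have "\<dots> = g x * cnj (omega k x)"
      using infsum_translate[of "\<lambda>h. fcoef g h * omega h x" k] fourier_rep x
      unfolding fourier_rep_def by simp
    finally show ?thesis .
  qed
  have summable: "(\<lambda>h. fcoef g (h+k) * omega h x) summable_on UNIV" for k
    using summable_on_translate[OF summable_on_fcoef_mult_bounded[of "\<lambda>h. omega (h - k) x" 1], of k]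
    by simp
  have "infsum (\<lambda>h. (\<Sum>k\<in>K. q k * fcoef g (h+k)) * omega h x) UNIV
      = infsum (\<lambda>h. \<Sum>k\<in>K. q k * (fcoef g (h+k) * omega h x)) UNIV"
    by (simp add: sum_distrib_right mult.assoc)
  also have "\<dots> = (\<Sum>k\<in>K. q k * (g x * cnj (omega k x)))"
    using assms summable by (simp add: infsum_sum summable_on_cmult_right infsum_cmult_right shifted)
  also have "\<dots> = g x * (\<Sum>k\<in>K. q k * cnj (omega k x))"
    by (simp add: sum_distrib_left mult_ac)
  finally show "g x * (\<Sum>k\<in>K. q k * cnj (omega k x))
      = infsum (\<lambda>h. (\<Sum>k\<in>K. q k * fcoef g (h+k)) * omega h x) UNIV"
    by simp
qed

lemma H_coef_mult_trig_poly_le: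
  assumes K: "finite K" and \<beta>: "0 < \<beta>" "\<beta> \<le> \<alpha>"
  defines "cst \<equiv> (2 powr (2*\<beta>+1)) ^ CARD('d)"
  shows "rw \<beta> \<gamma> h * (cmod (\<Sum>k\<in>K. q k * fcoef g (h+k)))\<^sup>2
    \<le> A_norm * (\<Sum>k\<in>K. cst * rw \<beta> \<gamma> k * (cmod (q k))\<^sup>2 * wcoef (h+k))"
proof -
  define a where "a k = cmod (q k) * sqrt (cst * rw \<beta> \<gamma> k)" for k
  have "sqrt (rw \<beta> \<gamma> h) * cmod (\<Sum>k\<in>K. q k * fcoef g (h+k))
      \<le> sqrt (rw \<beta> \<gamma> h) * (\<Sum>k\<in>K. cmod (q k) * cmod (fcoef g (h+k)))"
    using rw_pos[of \<beta> \<gamma> h]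
    by (intro mult_left_mono) (auto intro: order.trans[OF norm_sum] simp: norm_mult)
  also have "\<dots> = (\<Sum>k\<in>K. cmod (q k) * cmod (fcoef g (h+k)) * sqrt (rw \<beta> \<gamma> h))"
    by (simp add: sum_distrib_left mult_ac)
  also have "\<dots> \<le> (\<Sum>k\<in>K. cmod (q k) * cmod (fcoef g (h+k))
      * (sqrt (cst * rw \<beta> \<gamma> k) * sqrt (rw \<alpha> \<gamma> (h+k))))"
    unfolding cst_def by (intro sum_mono mult_left_mono sqrt_rw_le_shift[OF \<beta> \<gamma>_pos]) auto
  also have "\<dots> = (\<Sum>k\<in>K. a k * wcoef (h+k))"
    unfolding a_def wcoef_def by (simp add: mult_ac)
  finally have root_bound:
    "sqrt (rw \<beta> \<gamma> h) * cmod (\<Sum>k\<in>K. q k * fcoef g (h+k)) \<le> (\<Sum>k\<in>K. a k * wcoef (h+k))" .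
  have "rw \<beta> \<gamma> h * (cmod (\<Sum>k\<in>K. q k * fcoef g (h+k)))\<^sup>2
      = (sqrt (rw \<beta> \<gamma> h) * cmod (\<Sum>k\<in>K. q k * fcoef g (h+k)))\<^sup>2"
    using rw_pos[of \<beta> \<gamma> h] by (simp add: power_mult_distrib)
  also have "\<dots> \<le> (\<Sum>k\<in>K. a k * wcoef (h+k))\<^sup>2"
    using root_bound rw_pos[of \<beta> \<gamma> h] by (intro power_mono) auto
  also have "\<dots> \<le> (\<Sum>k\<in>K. (a k)\<^sup>2 * wcoef (h+k)) * (\<Sum>k\<in>K. wcoef (h+k))"
    by (intro weighted_Cauchy_Schwarz wcoef_nonneg)
  also have "\<dots> \<le> (\<Sum>k\<in>K. (a k)\<^sup>2 * wcoef (h+k)) * A_norm"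
  proof (intro mult_left_mono sum_nonneg)
    have "(\<Sum>k\<in>K. wcoef (h+k)) = sum wcoef ((+) h ` K)"
      by (simp add: sum.reindex)
    also have "\<dots> \<le> A_norm"
      unfolding A_norm_def using K by (intro finite_sum_le_infsum wcoef_summable wcoef_nonneg) auto
    finally show "(\<Sum>k\<in>K. wcoef (h+k)) \<le> A_norm" .
  qed (simp add: wcoef_nonneg)
  also have "\<dots> = A_norm * (\<Sum>k\<in>K. cst * rw \<beta> \<gamma> k * (cmod (q k))\<^sup>2 * wcoef (h+k))"
  proof -
    have "(a k)\<^sup>2 = cst * rw \<beta> \<gamma> k * (cmod (q k))\<^sup>2" for k
      unfolding a_def cst_def using rw_pos[of \<beta> \<gamma> k] by (simp add: power_mult_distrib)
    then show ?thesis
      by (simp add: mult.commute)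
  qed
  finally show ?thesis .
qed

lemma H_norm_mult_trig_poly:
  assumes K: "finite K" and \<beta>: "0 < \<beta>" "\<beta> \<le> \<alpha>"
  defines "cst \<equiv> (2 powr (2*\<beta>+1)) ^ CARD('d)"
  shows "(\<lambda>h. rw \<beta> \<gamma> h * (cmod (\<Sum>k\<in>K. q k * fcoef g (h+k)))\<^sup>2) summable_on UNIV"
    and "infsum (\<lambda>h. rw \<beta> \<gamma> h * (cmod (\<Sum>k\<in>K. q k * fcoef g (h+k)))\<^sup>2) UNIV
           \<le> cst * A_norm\<^sup>2 * (\<Sum>k\<in>K. rw \<beta> \<gamma> k * (cmod (q k))\<^sup>2)"
proof -
  define b where "b k = cst * rw \<beta> \<gamma> k * (cmod (q k))\<^sup>2" for k
  define D where "D h = A_norm * (\<Sum>k\<in>K. b k * wcoef (h+k))" for h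
  have translate: "((\<lambda>h. wcoef (h+k)) has_sum A_norm) UNIV" for k
    using summable_on_translate[OF wcoef_summable, of k] infsum_translate[of wcoef k]
    unfolding A_norm_def by (simp add: summable_iff_has_sum_infsum)
  have D_sum: "(D has_sum A_norm * (\<Sum>k\<in>K. b k * A_norm)) UNIV"
    unfolding D_def
    by (rule has_sum_cmult_right, rule has_sum_sum[OF K], rule has_sum_cmult_right, rule translate)
  have le_D: "rw \<beta> \<gamma> h * (cmod (\<Sum>k\<in>K. q k * fcoef g (h+k)))\<^sup>2 \<le> D h" for h
    using H_coef_mult_trig_poly_le[OF K \<beta>, where h=h and q=q]
    unfolding D_def b_def cst_def .
  show summable: "(\<lambda>h. rw \<beta> \<gamma> h * (cmod (\<Sum>k\<in>K. q k * fcoef g (h+k)))\<^sup>2) summable_on UNIV"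
    using has_sum_imp_summable[OF D_sum] le_D
    by (rule summable_on_comparison_test) (simp add: less_imp_le[OF rw_pos])
  have "infsum (\<lambda>h. rw \<beta> \<gamma> h * (cmod (\<Sum>k\<in>K. q k * fcoef g (h+k)))\<^sup>2) UNIV
      \<le> A_norm * (\<Sum>k\<in>K. b k * A_norm)"
    using infsum_mono[OF summable has_sum_imp_summable[OF D_sum] le_D] infsumI[OF D_sum] by simp
  also have "\<dots> = cst * A_norm\<^sup>2 * (\<Sum>k\<in>K. rw \<beta> \<gamma> k * (cmod (q k))\<^sup>2)"
    unfolding b_def by (simp add: sum_distrib_left sum_distrib_right power2_eq_square mult_ac)
  finally show "infsum (\<lambda>h. rw \<beta> \<gamma> h * (cmod (\<Sum>k\<in>K. q k * fcoef g (h+k)))\<^sup>2) UNIV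
      \<le> cst * A_norm\<^sup>2 * (\<Sum>k\<in>K. rw \<beta> \<gamma> k * (cmod (q k))\<^sup>2)" .
qed

lemma mult_trig_poly_in_H_unit_ball:
  assumes K: "finite K" and \<beta>: "0 < \<beta>" "\<beta> \<le> \<alpha>"
    and small: "(2 powr (2*\<beta>+1)) ^ CARD('d) * A_norm\<^sup>2 * (\<Sum>k\<in>K. rw \<beta> \<gamma> k * (cmod (q k))\<^sup>2) \<le> 1"
  shows "(\<lambda>y. g y * (\<Sum>k\<in>K. q k * cnj (omega k y))) \<in> H_unit_ball \<beta> \<gamma>"
proof -
  define f where "f y = g y * (\<Sum>k\<in>K. q k * cnj (omega k y))" for y
  have f_int: "f absolutely_integrable_on cbox 0 One"
    unfolding f_def
    by (intro absolutely_integrable_mult_continuous absolutely_integrable continuous_intros)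
  have "bounded ((\<lambda>y. cmod (f y)) ` cbox 0 One)"
  proof -
    have "cmod (f y) \<le> infsum (\<lambda>k. cmod (fcoef g k)) UNIV * (\<Sum>k\<in>K. cmod (q k))"
      if "y \<in> cbox 0 One" for y
    proof -
      have "cmod (\<Sum>k\<in>K. q k * cnj (omega k y)) \<le> (\<Sum>k\<in>K. cmod (q k))"
        by (rule order.trans[OF norm_sum]) (simp add: norm_mult)
      then show ?thesis
        unfolding f_def norm_mult using norm_le_infsum_norm_fcoef[OF that]
        by (intro mult_mono) (auto intro: infsum_nonneg)
    qed
    then show ?thesis
      unfolding bounded_iff by auto
  qed
  moreover have "(\<lambda>y. cmod (f y)) absolutely_integrable_on cbox 0 One"
    using absolutely_integrable_norm[OF f_int] by (simp add: o_def)
  ultimately have "(\<lambda>y. cmod (f y) * cmod (f y)) absolutely_integrable_on cbox 0 One"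
    by (intro absolutely_integrable_bounded_measurable_product[OF bilinear_times])
      (auto simp: absolutely_integrable_measurable)
  then have square_int: "(\<lambda>y. (cmod (f y))\<^sup>2) integrable_on cbox 0 One"
    by (simp add: power2_eq_square absolutely_integrable_on_def)
  have fcoef_f: "fcoef f h = (\<Sum>k\<in>K. q k * fcoef g (h+k))" for h
    unfolding f_def by (rule fcoef_mult_trig_poly[OF K])
  have "(\<lambda>h. rw \<beta> \<gamma> h * (cmod (fcoef f h))\<^sup>2) summable_on UNIV"
    and "infsum (\<lambda>h. rw \<beta> \<gamma> h * (cmod (fcoef f h))\<^sup>2) UNIV \<le> 1"
    using H_norm_mult_trig_poly[OF K \<beta>, of q] small by (simp_all add: fcoef_f)
  moreover have "fourier_rep f"
    unfolding f_def by (rule fourier_rep_mult_trig_poly[OF K])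
  ultimately have "f \<in> H_unit_ball \<beta> \<gamma>"
    using f_int square_int unfolding H_unit_ball_def by blast
  then show ?thesis
    unfolding f_def .
qed

end

section \<open>The two error terms\<close>

definition phi_coef :: "nat \<Rightarrow> (nat \<Rightarrow> real^'d::finite) \<Rightarrow> (nat \<Rightarrow> real) \<Rightarrow> int^'d \<Rightarrow> complex" where
  "phi_coef N x c k = (1 / of_nat N) * (\<Sum>n<N. of_real (c n) * omega k (x n))"

definition mean_abs :: "nat \<Rightarrow> (nat \<Rightarrow> real) \<Rightarrow> real" where
  "mean_abs N c = (1 / real N) * (\<Sum>n<N. \<bar>c n\<bar>)"

lemma phiK_eq_sum_phi_coef: "phiK K N x c y = (\<Sum>k\<in>K. phi_coef N x c k * cnj (omega k y))"
  unfolding phiK_def phi_coef_def by simp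

lemma mean_abs_nonneg: "0 \<le> mean_abs N c"
  unfolding mean_abs_def by (simp add: sum_nonneg)

lemma wce_nonneg: "0 \<le> wce \<beta> \<gamma> z L"
proof -
  have "(\<lambda>_. 0) \<in> H_unit_ball \<beta> \<gamma>"
    by (simp add: H_unit_ball_def fcoef_def fourier_rep_def integrable_0)
  then show ?thesis
    unfolding wce_def by (rule SUP_upper2) simp
qed

lemma norm_phi_coef_le: "cmod (phi_coef N x c k) \<le> mean_abs N c"
proof -
  have "cmod (\<Sum>n<N. of_real (c n) * omega k (x n)) \<le> (\<Sum>n<N. \<bar>c n\<bar>)"
    by (rule order.trans[OF norm_sum]) (simp add: norm_mult)
  then show ?thesis
    unfolding phi_coef_def mean_abs_def norm_mult by (simp add: norm_divide divide_right_mono)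
qed

context weighted_wiener
begin

lemma weighted_sum_eq_infsum_phi_coef:
  assumes "\<forall>n<N. x n \<in> cbox 0 One"
  shows "(1 / of_nat N) * (\<Sum>n<N. of_real (c n) * g (x n))
    = infsum (\<lambda>k. fcoef g k * phi_coef N x c k) UNIV"
proof -
  have summable: "(\<lambda>k. of_real (c n) * (fcoef g k * omega k (x n))) summable_on UNIV" for n
    by (intro summable_on_cmult_right fourier_series_summable)
  have "(\<Sum>n<N. of_real (c n) * g (x n))
      = (\<Sum>n<N. infsum (\<lambda>k. of_real (c n) * (fcoef g k * omega k (x n))) UNIV)"
    using assms fourier_rep unfolding fourier_rep_def
    by (simp add: infsum_cmult_right fourier_series_summable)
  also have "\<dots> = infsum (\<lambda>k. \<Sum>n<N. of_real (c n) * (fcoef g k * omega k (x n))) UNIV"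
    by (rule infsum_sum[symmetric]) (auto intro: summable)
  finally have "(1 / of_nat N) * (\<Sum>n<N. of_real (c n) * g (x n))
      = infsum (\<lambda>k. (1 / of_nat N) * (\<Sum>n<N. of_real (c n) * (fcoef g k * omega k (x n)))) UNIV"
    by (subst infsum_cmult_right) (auto intro: summable_on_sum summable)
  also have "\<dots> = infsum (\<lambda>k. fcoef g k * phi_coef N x c k) UNIV"
    unfolding phi_coef_def by (intro infsum_cong) (simp add: sum_distrib_left mult_ac)
  finally show ?thesis .
qed

lemma err1_le:
  assumes K: "finite K" and x: "\<forall>n<N. x n \<in> cbox 0 One"
    and T: "0 < T" "\<And>k. k \<notin> K \<Longrightarrow> T \<le> rw \<alpha> \<gamma> k"
  shows "err1 g N x c K \<le> mean_abs N c * A_norm / sqrt T"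
proof -
  let ?p = "phi_coef N x c" and ?S = "mean_abs N c"
  have summable: "(\<lambda>k. fcoef g k * ?p k) summable_on UNIV"
    by (rule summable_on_fcoef_mult_bounded[OF norm_phi_coef_le])
  have "integral (cbox 0 One) (\<lambda>y. g y * phiK K N x c y) = (\<Sum>k\<in>K. fcoef g k * ?p k)"
    unfolding phiK_eq_sum_phi_coef integral_mult_trig_poly[OF K] by (simp add: mult_ac)
  then have err1_eq: "err1 g N x c K = cmod (infsum (\<lambda>k. fcoef g k * ?p k) (UNIV - K))"
    unfolding err1_def weighted_sum_eq_infsum_phi_coef[OF x]
    using infsum_Diff[OF summable summable_on_finite[OF K]] K by simp
  have tail_le: "cmod (fcoef g k * ?p k) \<le> wcoef k * (?S / sqrt T)" if "k \<notin> K" for k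
  proof -
    have "sqrt T * cmod (fcoef g k) \<le> wcoef k"
      unfolding wcoef_def using T(2)[OF that] by (intro mult_right_mono) auto
    then have "cmod (fcoef g k) \<le> wcoef k / sqrt T"
      using T(1) by (simp add: field_simps)
    then have "cmod (fcoef g k) * cmod (?p k) \<le> wcoef k / sqrt T * ?S"
      using norm_phi_coef_le[of N x c k] wcoef_nonneg[of k] T(1) by (intro mult_mono) auto
    then show ?thesis
      by (simp add: norm_mult)
  qed
  have majorant: "(\<lambda>k. wcoef k * (?S / sqrt T)) summable_on UNIV"
    by (intro summable_on_cmult_left wcoef_summable)
  have tail_summable: "(\<lambda>k. cmod (fcoef g k * ?p k)) summable_on (UNIV - K)"
    by (rule summable_on_comparison_test[OF summable_on_subset_banach[OF majorant]])
      (use tail_le in auto)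
  have "err1 g N x c K \<le> infsum (\<lambda>k. cmod (fcoef g k * ?p k)) (UNIV - K)"
    unfolding err1_eq by (rule norm_infsum_bound) (use tail_summable in simp)
  also have "\<dots> \<le> infsum (\<lambda>k. wcoef k * (?S / sqrt T)) UNIV"
    by (rule infsum_mono_neutral[OF tail_summable majorant])
      (use tail_le T(1) mean_abs_nonneg wcoef_nonneg in auto)
  also have "\<dots> = ?S * A_norm / sqrt T"
    unfolding A_norm_def by (subst infsum_cmult_left) (auto intro: wcoef_summable)
  finally show ?thesis .
qed

lemma err2_le_wce:
  assumes K: "finite K" and \<beta>: "0 < \<beta>" "\<beta> \<le> \<alpha>" and W: "wce \<beta> \<gamma> z L \<le> ereal W"
  shows "err2 g N x c K z L \<le>
     (sqrt ((2 powr (2*\<beta>+1)) ^ CARD('d) * A_norm\<^sup>2 * (mean_abs N c)\<^sup>2 * (\<Sum>k\<in>K. rw \<beta> \<gamma> k)) + 1) * W"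
proof -
  define X where "X = (2 powr (2*\<beta>+1)) ^ CARD('d) * A_norm\<^sup>2 * (mean_abs N c)\<^sup>2 * (\<Sum>k\<in>K. rw \<beta> \<gamma> k)"
  \<comment> \<open>Dividing by M puts g * phiK into the unit ball of H.\<close>
  define M where "M = sqrt X + 1"
  have "0 \<le> X"
    unfolding X_def by (intro mult_nonneg_nonneg sum_nonneg less_imp_le[OF rw_pos]) auto
  then have M: "1 \<le> M" "X \<le> M\<^sup>2"
    unfolding M_def
    by (simp, metis real_sqrt_pow2 power_mono real_sqrt_ge_zero le_add_same_cancel1 zero_le_one)
  define q where "q k = phi_coef N x c k / of_real M" for k
  define f where "f y = g y * (\<Sum>k\<in>K. q k * cnj (omega k y))" for y
  have "(\<Sum>k\<in>K. rw \<beta> \<gamma> k * (cmod (q k))\<^sup>2) \<le> (\<Sum>k\<in>K. rw \<beta> \<gamma> k * ((mean_abs N c)\<^sup>2 / M\<^sup>2))"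
    unfolding q_def using M(1) norm_phi_coef_le[of N x c]
    by (intro sum_mono mult_left_mono)
      (auto simp: norm_divide power_divide intro!: divide_right_mono power_mono less_imp_le[OF rw_pos])
  then have "(2 powr (2*\<beta>+1)) ^ CARD('d) * A_norm\<^sup>2 * (\<Sum>k\<in>K. rw \<beta> \<gamma> k * (cmod (q k))\<^sup>2)
      \<le> (2 powr (2*\<beta>+1)) ^ CARD('d) * A_norm\<^sup>2 * (\<Sum>k\<in>K. rw \<beta> \<gamma> k * ((mean_abs N c)\<^sup>2 / M\<^sup>2))"
    by (intro mult_left_mono) auto
  also have "\<dots> = X / M\<^sup>2"
    unfolding X_def sum_distrib_right[symmetric] by (simp add: field_simps)
  also have "\<dots> \<le> 1"
    using M by simp
  finally have "f \<in> H_unit_ball \<beta> \<gamma>"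
    unfolding f_def by (rule mult_trig_poly_in_H_unit_ball[OF K \<beta>])
  then have "ereal (cmod (integral (cbox 0 One) f - (1 / real L) * (\<Sum>l<L. f (z l)))) \<le> wce \<beta> \<gamma> z L"
    unfolding wce_def by (rule SUP_upper)
  also note W
  finally have f_error: "cmod (integral (cbox 0 One) f - (1 / real L) * (\<Sum>l<L. f (z l))) \<le> W"
    by simp
  have f_eq: "f y = g y * phiK K N x c y / of_real M" for y
    unfolding f_def q_def phiK_eq_sum_phi_coef by (simp add: sum_divide_distrib[symmetric])
  have "integral (cbox 0 One) f - (1 / real L) * (\<Sum>l<L. f (z l))
      = (integral (cbox 0 One) (\<lambda>y. g y * phiK K N x c y)
          - (1 / of_nat L) * (\<Sum>l<L. g (z l) * phiK K N x c (z l))) / of_real M"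
    unfolding f_eq by (simp add: sum_divide_distrib diff_divide_distrib mult.commute)
  then have "err2 g N x c K z L / M \<le> W"
    using f_error M(1) unfolding err2_def by (simp add: norm_divide)
  then have "err2 g N x c K z L \<le> M * W"
    using M(1) by (simp add: divide_le_eq mult.commute)
  then show ?thesis
    unfolding M_def X_def .
qed

end

section \<open>The hyperbolic cross\<close>

lemma vec_box_eq_image: "{k::'a^'d::finite. \<forall>j. k$j \<in> S j} = vec_lambda ` PiE UNIV S"
proof (intro set_eqI iffI)
  fix k :: "'a^'d"
  assume "k \<in> {k. \<forall>j. k$j \<in> S j}"
  then show "k \<in> vec_lambda ` PiE UNIV S"
    by (intro image_eqI[of _ _ "vec_nth k"]) auto
qed auto

lemma finite_vec_box: "(\<And>j. finite (S j)) \<Longrightarrow> finite {k::'a^'d::finite. \<forall>j. k$j \<in> S j}"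
  unfolding vec_box_eq_image by (intro finite_imageI finite_PiE) auto

lemma card_vec_box: "card {k::'a^'d::finite. \<forall>j. k$j \<in> S j} = (\<Prod>j\<in>UNIV. card (S j))"
proof -
  have "inj_on vec_lambda (PiE UNIV S :: ('d \<Rightarrow> 'a) set)"
    by (auto simp: inj_on_def)
  then show ?thesis
    unfolding vec_box_eq_image by (simp add: card_image card_PiE)
qed

lemma vec_sum_eq_subset_box: "{t::nat^'d::finite. (\<Sum>j\<in>UNIV. t$j) = n} \<subseteq> {t. \<forall>j. t$j \<in> {0..n}}"
  using member_le_sum[of _ UNIV "\<lambda>j. _ $ j"] by fastforce

lemma finite_vec_sum_eq: "finite {t::nat^'d::finite. (\<Sum>j\<in>UNIV. t$j) = n}"
  by (rule finite_subset[OF vec_sum_eq_subset_box finite_vec_box]) simp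

lemma card_vec_sum_eq_le: "card {t::nat^'d::finite. (\<Sum>j\<in>UNIV. t$j) = n} \<le> (n + 1) ^ CARD('d)"
proof -
  have "card {t::nat^'d. (\<Sum>j\<in>UNIV. t$j) = n} \<le> card {t::nat^'d. \<forall>j. t$j \<in> {0..n}}"
    by (rule card_mono[OF finite_vec_box vec_sum_eq_subset_box]) simp
  also have "\<dots> = (n + 1) ^ CARD('d)"
    by (subst card_vec_box) simp
  finally show ?thesis .
qed

lemma abs_le_if_r1_le:
  assumes "0 < \<alpha>" "0 < \<gamma>" "\<gamma> \<le> 1" "r1 \<alpha> \<gamma> h \<le> 2 ^ t"
  shows "\<bar>real_of_int h\<bar> powr (2*\<alpha>) \<le> 2 powr real t"
proof -
  have "\<bar>real_of_int h\<bar> powr (2*\<alpha>) \<le> \<gamma> * 2 ^ t"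
    using assms(2,4) unfolding r1_def by (simp add: divide_le_eq mult.commute)
  also have "\<dots> \<le> 2 ^ t"
    using assms(2,3) by simp
  finally show ?thesis
    by (simp add: powr_realpow)
qed

lemma abs_le_powr_if_r1_le:
  assumes "0 < \<alpha>" "0 < \<gamma>" "\<gamma> \<le> 1" "r1 \<alpha> \<gamma> h \<le> 2 ^ t"
  shows "\<bar>real_of_int h\<bar> \<le> 2 powr (real t / (2*\<alpha>))"
proof -
  have "\<bar>real_of_int h\<bar> = (\<bar>real_of_int h\<bar> powr (2*\<alpha>)) powr (1/(2*\<alpha>))"
    using assms(1) by (simp add: powr_powr)
  also have "\<dots> \<le> (2 powr real t) powr (1/(2*\<alpha>))"
    using abs_le_if_r1_le[OF assms] assms(1) by (intro powr_mono2) auto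
  finally show ?thesis
    by (simp add: powr_powr)
qed

lemma r1_le_powr_if_r1_le:
  assumes "0 < \<beta>" "\<beta> \<le> \<alpha>" "0 < \<gamma>" "\<gamma> \<le> 1" "r1 \<alpha> \<gamma> h \<le> 2 ^ t"
  shows "r1 \<beta> \<gamma> h \<le> 2 powr (real t * \<beta> / \<alpha>) / \<gamma>"
proof -
  have \<alpha>: "0 < \<alpha>"
    using assms(1,2) by linarith
  have "\<bar>real_of_int h\<bar> powr (2*\<beta>) = (\<bar>real_of_int h\<bar> powr (2*\<alpha>)) powr (\<beta>/\<alpha>)"
    using \<alpha> by (simp add: powr_powr)
  also have "\<dots> \<le> (2 powr real t) powr (\<beta>/\<alpha>)"
    using abs_le_if_r1_le[OF \<alpha> assms(3-5)] \<alpha> assms(1) by (intro powr_mono2) auto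
  finally have "\<bar>real_of_int h\<bar> powr (2*\<beta>) / \<gamma> \<le> 2 powr (real t * \<beta> / \<alpha>) / \<gamma>"
    using assms(3) by (simp add: divide_right_mono powr_powr)
  moreover have "1 \<le> 2 powr (real t * \<beta> / \<alpha>) / \<gamma>"
    using assms \<alpha> by (simp add: le_divide_eq order.trans[OF _ ge_one_powr_ge_zero])
  ultimately show ?thesis
    unfolding r1_def by simp
qed

definition Qbox :: "real \<Rightarrow> ('d::finite \<Rightarrow> real) \<Rightarrow> nat^'d \<Rightarrow> (int^'d) set" where
  "Qbox \<alpha> \<gamma> t = {k. \<forall>j. r1 \<alpha> (\<gamma> j) (k$j) \<le> 2 ^ (t$j)}"

lemma Qset_eq_UN_Qbox:
  assumes "0 \<le> m"
  shows "Qset \<alpha> \<gamma> m = (\<Union>t\<in>{t. (\<Sum>j\<in>UNIV. t$j) = nat m}. Qbox \<alpha> \<gamma> t)"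
proof -
  have "int n = m \<longleftrightarrow> n = nat m" for n
    using assms by auto
  then show ?thesis
    unfolding Qset_def Qbox_def by (simp del: of_nat_sum)
qed

lemma Qset_empty: "m < 0 \<Longrightarrow> Qset \<alpha> \<gamma> m = {}"
  unfolding Qset_def by (auto simp del: of_nat_sum)

lemma Qbox_subset_box:
  assumes "0 < \<alpha>" "\<forall>j. 0 < \<gamma> j \<and> \<gamma> j \<le> 1"
  shows "Qbox \<alpha> \<gamma> t \<subseteq> {k. \<forall>j. \<bar>k$j\<bar> \<le> \<lfloor>2 powr (real (t$j) / (2*\<alpha>))\<rfloor>}"
proof safe
  fix k j
  assume "k \<in> Qbox \<alpha> \<gamma> t"
  then have "\<bar>real_of_int (k$j)\<bar> \<le> 2 powr (real (t$j) / (2*\<alpha>))"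
    using assms unfolding Qbox_def by (intro abs_le_powr_if_r1_le[of \<alpha> "\<gamma> j"]) auto
  then show "\<bar>k$j\<bar> \<le> \<lfloor>2 powr (real (t$j) / (2*\<alpha>))\<rfloor>"
    by (simp add: le_floor_iff)
qed

lemma
  fixes \<gamma> :: "'d::finite \<Rightarrow> real"
  assumes "0 < \<alpha>" "\<forall>j. 0 < \<gamma> j \<and> \<gamma> j \<le> 1"
  shows finite_Qbox: "finite (Qbox \<alpha> \<gamma> t)"
    and card_Qbox_le: "real (card (Qbox \<alpha> \<gamma> t)) \<le> 3 ^ CARD('d) * 2 powr (real (\<Sum>j\<in>UNIV. t$j) / (2*\<alpha>))"
proof -
  define R where "R j = \<lfloor>2 powr (real (t$j) / (2*\<alpha>))\<rfloor>" for j
  have box: "Qbox \<alpha> \<gamma> t \<subseteq> {k. \<forall>j. k$j \<in> {-R j..R j}}"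
  proof
    fix k
    assume "k \<in> Qbox \<alpha> \<gamma> t"
    then have "\<bar>k$j\<bar> \<le> R j" for j
      using Qbox_subset_box[OF assms, of t] unfolding R_def by blast
    then show "k \<in> {k. \<forall>j. k$j \<in> {-R j..R j}}"
      by (simp add: abs_le_iff minus_le_iff)
  qed
  moreover have box_finite: "finite {k::int^'d. \<forall>j. k$j \<in> {-R j..R j}}"
    by (rule finite_vec_box) simp
  ultimately show "finite (Qbox \<alpha> \<gamma> t)"
    by (rule finite_subset)
  have "card (Qbox \<alpha> \<gamma> t) \<le> card {k::int^'d. \<forall>j. k$j \<in> {-R j..R j}}"
    by (rule card_mono[OF box_finite box])
  also have "\<dots> = (\<Prod>j\<in>UNIV. nat (2 * R j + 1))"
    by (subst card_vec_box) simp
  finally have "real (card (Qbox \<alpha> \<gamma> t)) \<le> (\<Prod>j\<in>UNIV. real (nat (2 * R j + 1)))"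
    by (simp flip: of_nat_prod)
  also have "\<dots> \<le> (\<Prod>j\<in>UNIV. 3 * 2 powr (real (t$j) / (2*\<alpha>)))"
  proof (intro prod_mono conjI)
    fix j
    have "1 \<le> 2 powr (real (t$j) / (2*\<alpha>))"
      using assms(1) by (intro ge_one_powr_ge_zero) auto
    then show "real (nat (2 * R j + 1)) \<le> 3 * 2 powr (real (t$j) / (2*\<alpha>))"
      unfolding R_def by (simp add: le_floor_iff) linarith
  qed auto
  also have "\<dots> = 3 ^ CARD('d) * 2 powr (real (\<Sum>j\<in>UNIV. t$j) / (2*\<alpha>))"
    by (simp add: prod.distrib powr_sum sum_divide_distrib)
  finally show "real (card (Qbox \<alpha> \<gamma> t)) \<le> 3 ^ CARD('d) * 2 powr (real (\<Sum>j\<in>UNIV. t$j) / (2*\<alpha>))" .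
qed

lemma rw_le_on_Qbox:
  assumes "0 < \<beta>" "\<beta> \<le> \<alpha>" "\<forall>j. 0 < \<gamma> j \<and> \<gamma> j \<le> 1" "k \<in> Qbox \<alpha> \<gamma> t"
  shows "rw \<beta> \<gamma> k \<le> (\<Prod>j\<in>UNIV. 1 / \<gamma> j) * 2 powr (real (\<Sum>j\<in>UNIV. t$j) * \<beta> / \<alpha>)"
proof -
  have "rw \<beta> \<gamma> k \<le> (\<Prod>j\<in>UNIV. 2 powr (real (t$j) * \<beta> / \<alpha>) / \<gamma> j)"
    unfolding rw_def using assms
    by (intro prod_mono conjI order.trans[OF zero_le_one r1_ge_1] r1_le_powr_if_r1_le)
      (auto simp: Qbox_def)
  also have "\<dots> = (\<Prod>j\<in>UNIV. 1 / \<gamma> j) * 2 powr (real (\<Sum>j\<in>UNIV. t$j) * \<beta> / \<alpha>)"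
    by (simp add: powr_sum prod.distrib prod_dividef sum_distrib_right sum_divide_distrib)
  finally show ?thesis .
qed

lemma finite_Qset:
  assumes "0 < \<alpha>" "\<forall>j. 0 < \<gamma> j \<and> \<gamma> j \<le> 1"
  shows "finite (Qset \<alpha> \<gamma> m)"
proof (cases "0 \<le> m")
  case True
  then show ?thesis
    using finite_Qbox[OF assms] finite_vec_sum_eq by (auto simp: Qset_eq_UN_Qbox intro: finite_UN_I)
qed (simp add: Qset_empty)

lemma rw_le_on_Qset:
  assumes \<gamma>: "\<forall>j. 0 < \<gamma> j \<and> \<gamma> j \<le> 1" and \<beta>: "0 < \<beta>" "\<beta> \<le> \<alpha>" and m: "0 \<le> m"
    and k: "k \<in> Qset \<alpha> \<gamma> m"
  shows "rw \<beta> \<gamma> k \<le> (\<Prod>j\<in>UNIV. 1 / \<gamma> j) * 2 powr (m * \<beta> / \<alpha>)"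
proof -
  obtain t where t: "(\<Sum>j\<in>UNIV. t$j) = nat m" "k \<in> Qbox \<alpha> \<gamma> t"
    using k unfolding Qset_eq_UN_Qbox[OF m] by blast
  then have "real (\<Sum>j\<in>UNIV. t$j) = m"
    using m by (simp del: of_nat_sum)
  then show ?thesis
    using rw_le_on_Qbox[OF \<beta> \<gamma> t(2)] by simp
qed

lemma card_Qset_le:
  fixes \<gamma> :: "'d::finite \<Rightarrow> real"
  assumes \<alpha>: "0 < \<alpha>" and \<gamma>: "\<forall>j. 0 < \<gamma> j \<and> \<gamma> j \<le> 1" and m: "0 \<le> m"
  shows "real (card (Qset \<alpha> \<gamma> m)) \<le> (real (nat m) + 1) ^ CARD('d) * 3 ^ CARD('d) * 2 powr (m / (2*\<alpha>))"
proof -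
  define T where "T = {t::nat^'d. (\<Sum>j\<in>UNIV. t$j) = nat m}"
  have "card (Qset \<alpha> \<gamma> m) \<le> (\<Sum>t\<in>T. card (Qbox \<alpha> \<gamma> t))"
    unfolding Qset_eq_UN_Qbox[OF m] T_def by (rule card_UN_le[OF finite_vec_sum_eq])
  then have "real (card (Qset \<alpha> \<gamma> m)) \<le> (\<Sum>t\<in>T. real (card (Qbox \<alpha> \<gamma> t)))"
    by (simp flip: of_nat_sum)
  also have "\<dots> \<le> real (card T) * (3 ^ CARD('d) * 2 powr (m / (2*\<alpha>)))"
  proof (rule sum_bounded_above)
    fix t
    assume "t \<in> T"
    then have "real (\<Sum>j\<in>UNIV. t$j) = m"
      using m unfolding T_def by (simp del: of_nat_sum)
    then show "real (card (Qbox \<alpha> \<gamma> t)) \<le> 3 ^ CARD('d) * 2 powr (m / (2*\<alpha>))"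
      using card_Qbox_le[OF \<alpha> \<gamma>, of t] by simp
  qed
  also have "\<dots> \<le> (real (nat m) + 1) ^ CARD('d) * (3 ^ CARD('d) * 2 powr (m / (2*\<alpha>)))"
  proof (intro mult_right_mono)
    have "real (card T) \<le> real ((nat m + 1) ^ CARD('d))"
      unfolding T_def by (intro of_nat_mono card_vec_sum_eq_le)
    then show "real (card T) \<le> (real (nat m) + 1) ^ CARD('d)"
      by (simp add: add.commute)
  qed simp
  finally show ?thesis
    by (simp add: mult.assoc)
qed

lemma sum_rw_Qset_le:
  fixes \<gamma> :: "'d::finite \<Rightarrow> real"
  assumes \<gamma>: "\<forall>j. 0 < \<gamma> j \<and> \<gamma> j \<le> 1" and \<beta>: "0 < \<beta>" "2*\<beta>+1 \<le> 2*\<alpha>" and m: "0 \<le> m"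
  shows "(\<Sum>k\<in>Qset \<alpha> \<gamma> m. rw \<beta> \<gamma> k)
     \<le> (real (nat m) + 1) ^ CARD('d) * 3 ^ CARD('d) * (\<Prod>j\<in>UNIV. 1 / \<gamma> j) * 2 powr m"
proof -
  define G where "G = (\<Prod>j\<in>UNIV. 1 / \<gamma> j)"
  have \<alpha>: "0 < \<alpha>" "\<beta> \<le> \<alpha>"
    using \<beta> by auto
  have G_nonneg: "0 \<le> G"
    unfolding G_def using \<gamma> by (simp add: prod_nonneg less_imp_le)
  have "(\<Sum>k\<in>Qset \<alpha> \<gamma> m. rw \<beta> \<gamma> k) \<le> real (card (Qset \<alpha> \<gamma> m)) * (G * 2 powr (m * \<beta> / \<alpha>))"
    unfolding G_def using rw_le_on_Qset[OF \<gamma> \<beta>(1) \<alpha>(2) m] by (rule sum_bounded_above)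
  also have "\<dots> \<le> ((real (nat m) + 1) ^ CARD('d) * 3 ^ CARD('d) * 2 powr (m / (2*\<alpha>)))
      * (G * 2 powr (m * \<beta> / \<alpha>))"
    using card_Qset_le[OF \<alpha>(1) \<gamma> m] G_nonneg by (intro mult_right_mono) auto
  also have "\<dots> = (real (nat m) + 1) ^ CARD('d) * 3 ^ CARD('d) * G * 2 powr (m / (2*\<alpha>) + m * \<beta> / \<alpha>)"
    by (simp add: powr_add mult_ac)
  also have "\<dots> \<le> (real (nat m) + 1) ^ CARD('d) * 3 ^ CARD('d) * G * 2 powr m"
  proof (intro mult_left_mono powr_mono)
    have "m / (2*\<alpha>) + m * \<beta> / \<alpha> = m * ((2*\<beta>+1) / (2*\<alpha>))"
      using \<alpha> by (simp add: field_simps)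
    also have "\<dots> \<le> m"
      using \<beta> \<alpha> m by (intro mult_right_le_one_le) (auto simp: divide_le_eq)
    finally show "m / (2*\<alpha>) + m * \<beta> / \<alpha> \<le> m" .
  qed (use G_nonneg in auto)
  finally show ?thesis
    unfolding G_def .
qed

lemma le_two_power_nat_ceiling_log:
  assumes "1 \<le> r"
  shows "r \<le> 2 ^ nat \<lceil>log 2 r\<rceil>"
proof -
  have "r = 2 powr (log 2 r)"
    using assms by simp
  also have "\<dots> \<le> 2 powr real (nat \<lceil>log 2 r\<rceil>)"
    using assms by (intro powr_mono) linarith+
  finally show ?thesis
    by (simp add: powr_realpow)
qed

lemma nat_ceiling_log_le: "1 \<le> r \<Longrightarrow> real (nat \<lceil>log 2 r\<rceil>) \<le> log 2 r + 1"
  by simp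

lemma rw_le_imp_mem_Qset:
  fixes \<gamma> :: "'d::finite \<Rightarrow> real"
  assumes "rw \<alpha> \<gamma> k \<le> 2 powr (real_of_int m - real CARD('d))"
  shows "k \<in> Qset \<alpha> \<gamma> m"
proof -
  define r where "r j = r1 \<alpha> (\<gamma> j) (k$j)" for j
  define s where "s j = nat \<lceil>log 2 (r j)\<rceil>" for j
  have r_ge_1: "1 \<le> r j" for j
    unfolding r_def by (rule r1_ge_1)
  have "2 powr (\<Sum>j\<in>UNIV. log 2 (r j)) = rw \<alpha> \<gamma> k"
    using r_ge_1 unfolding rw_def r_def by (simp add: powr_sum less_le_trans[OF zero_less_one])
  then have "2 powr (\<Sum>j\<in>UNIV. log 2 (r j)) \<le> 2 powr (real_of_int m - real CARD('d))"
    using assms by simp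
  then have "(\<Sum>j\<in>UNIV. log 2 (r j)) \<le> real_of_int m - real CARD('d)"
    by simp
  moreover have "real (\<Sum>j\<in>UNIV. s j) \<le> (\<Sum>j\<in>UNIV. log 2 (r j) + 1)"
    unfolding of_nat_sum s_def using r_ge_1 by (intro sum_mono nat_ceiling_log_le)
  then have "real (\<Sum>j\<in>UNIV. s j) \<le> (\<Sum>j\<in>UNIV. log 2 (r j)) + real CARD('d)"
    by (simp add: sum.distrib)
  ultimately have s_sum: "int (\<Sum>j\<in>UNIV. s j) \<le> m"
    by linarith
  \<comment> \<open>Pad one coordinate of s so that the entries sum to exactly m.\<close>
  fix j0 :: 'd
  define t :: "nat^'d" where "t = (\<chi> j. s j + (if j = j0 then nat m - (\<Sum>j\<in>UNIV. s j) else 0))"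
  have "(\<Sum>j\<in>UNIV. s j) \<le> nat m"
    using s_sum by linarith
  then have "(\<Sum>j\<in>UNIV. t$j) = nat m"
    unfolding t_def by (simp add: sum.distrib)
  then have "int (\<Sum>j\<in>UNIV. t$j) = m"
    using s_sum by linarith
  moreover have "r1 \<alpha> (\<gamma> j) (k $ j) \<le> 2 ^ (t $ j)" for j
  proof -
    have "(2::real) ^ s j \<le> 2 ^ (t $ j)"
      unfolding t_def by (intro power_increasing) auto
    then show ?thesis
      using le_two_power_nat_ceiling_log[OF r_ge_1[of j]] unfolding r_def s_def by linarith
  qed
  ultimately show ?thesis
    unfolding Qset_def by blast
qed

section \<open>Asymptotics in L\<close>

lemma two_powr_mult_log: "0 < L \<Longrightarrow> 2 powr (c * log 2 L) = L powr c"
  using powr_powr[of 2 "log 2 L" c] by (simp add: mult.commute)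

lemma mult_powr_le_abs_mult_powr:
  fixes L :: real
  assumes "1 \<le> L" "p \<le> q"
  shows "c * L powr p \<le> \<bar>c\<bar> * L powr q"
proof -
  have "c * L powr p \<le> \<bar>c\<bar> * L powr p"
    by (intro mult_right_mono) auto
  also have "\<dots> \<le> \<bar>c\<bar> * L powr q"
    using assms by (intro mult_left_mono powr_mono) auto
  finally show ?thesis .
qed

lemma two_powr_half_diff_le_if_ge_log:
  assumes "0 < L" "a * log 2 L + (d - 1) / 2 \<le> m"
  shows "2 powr ((d - m) / 2) \<le> 2 powr ((d + 1) / 4) * L powr (- a / 2)"
proof -
  have "2 powr ((d - m) / 2) \<le> 2 powr ((d + 1) / 4 + (- a / 2) * log 2 L)"
    using assms(2) by (intro powr_mono) (auto simp: field_simps)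
  also have "\<dots> = 2 powr ((d + 1) / 4) * L powr (- a / 2)"
    by (simp only: powr_add two_powr_mult_log[OF assms(1)])
  finally show ?thesis .
qed

lemma two_powr_le_if_le_log:
  assumes "0 < L" "m \<le> a * log 2 L + (d + 1) / 2"
  shows "2 powr m \<le> 2 powr ((d + 1) / 2) * L powr a"
proof -
  have "2 powr m \<le> 2 powr ((d + 1) / 2 + a * log 2 L)"
    using assms(2) by (intro powr_mono) auto
  also have "\<dots> = 2 powr ((d + 1) / 2) * L powr a"
    by (simp only: powr_add two_powr_mult_log[OF assms(1)])
  finally show ?thesis .
qed

lemma nat_plus_one_le_powr_if_le_log:
  assumes "1 \<le> L" "0 \<le> a" "0 < \<eta>" "-3 \<le> d" "0 \<le> m" "m \<le> a * log 2 L + (d + 1) / 2"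
  shows "real (nat m) + 1 \<le> (a / (\<eta> * ln 2) + (d + 3) / 2) * L powr \<eta>"
proof -
  have "log 2 L \<le> L powr \<eta> / (\<eta> * ln 2)"
    using ln_powr_bound[OF assms(1,3)] unfolding log_def by (simp add: divide_right_mono field_simps)
  then have "a * log 2 L \<le> a * (L powr \<eta> / (\<eta> * ln 2))"
    by (rule mult_left_mono[OF _ assms(2)])
  then have log_le: "a * log 2 L \<le> a / (\<eta> * ln 2) * L powr \<eta>"
    by simp
  have const_le: "(d + 3) / 2 \<le> (d + 3) / 2 * L powr \<eta>"
    using mult_left_mono[OF ge_one_powr_ge_zero[OF assms(1) less_imp_le[OF assms(3)]], of "(d + 3) / 2"]
      assms(4) by simp
  have "real (nat m) + 1 \<le> a * log 2 L + (d + 3) / 2"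
    using assms(5,6) by (simp add: field_simps)
  also have "\<dots> \<le> a / (\<eta> * ln 2) * L powr \<eta> + (d + 3) / 2 * L powr \<eta>"
    using log_le const_le by (rule add_mono)
  finally show ?thesis
    by (simp add: distrib_right)
qed

lemma ceiling_log_bounds:
  assumes "1 \<le> L" "0 \<le> a" "1 \<le> d"
  defines "m \<equiv> \<lceil>a * log 2 L + (d - 1) / 2\<rceil>"
  shows "a * log 2 L + (d - 1) / 2 \<le> m" and "m \<le> a * log 2 L + (d + 1) / 2" and "0 \<le> m"
proof -
  show lo: "a * log 2 L + (d - 1) / 2 \<le> m"
    unfolding m_def by (rule le_of_int_ceiling)
  have "m \<le> (a * log 2 L + (d - 1) / 2) + 1"
    unfolding m_def by (rule of_int_ceiling_le_add_one)
  then show "m \<le> a * log 2 L + (d + 1) / 2"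
    by (simp add: field_simps)
  have "0 \<le> a * log 2 L + (d - 1) / 2"
    using assms(1-3) by simp
  then show "0 \<le> m"
    using lo by linarith
qed

lemma pow_nat_plus_one_mult_two_powr_le:
  fixes L a \<eta> :: real
  assumes "1 \<le> L" "0 \<le> a" "0 < \<eta>" "0 \<le> m" "m \<le> a * log 2 L + (real n + 1) / 2"
  defines "P \<equiv> a / (\<eta> * ln 2) + (real n + 3) / 2"
  shows "(real (nat m) + 1) ^ n * 2 powr m \<le> P ^ n * 2 powr ((real n + 1) / 2) * L powr (\<eta> * n + a)"
proof -
  have P: "0 \<le> P"
    unfolding P_def using assms(2,3) by simp
  have "real (nat m) + 1 \<le> P * L powr \<eta>"
    unfolding P_def using assms by (intro nat_plus_one_le_powr_if_le_log) auto
  then have "(real (nat m) + 1) ^ n \<le> (P * L powr \<eta>) ^ n"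
    by (intro power_mono) auto
  also have "\<dots> = P ^ n * L powr (\<eta> * n)"
    using assms(1) by (simp add: power_mult_distrib powr_power mult.commute)
  finally have "(real (nat m) + 1) ^ n * 2 powr m
      \<le> P ^ n * L powr (\<eta> * n) * (2 powr ((real n + 1) / 2) * L powr a)"
    using two_powr_le_if_le_log[OF _ assms(5)] assms(1) P by (intro mult_mono) auto
  then show ?thesis
    using assms(1) by (simp add: powr_add mult_ac)
qed

context weighted_wiener
begin

lemma err1_Qset_le_powr:
  assumes x: "\<forall>n<N. x n \<in> cbox 0 One" and \<alpha>: "0 < \<alpha>" and \<gamma>: "\<forall>j. \<gamma> j \<le> 1"
    and L: "0 < L" and m: "a * log 2 L + (real CARD('d) - 1) / 2 \<le> m"
  shows "err1 g N x c (Qset \<alpha> \<gamma> m)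
    \<le> mean_abs N c * A_norm * 2 powr ((real CARD('d) + 1) / 4) * L powr (- a / 2)"
proof -
  define T where "T = 2 powr (real_of_int m - CARD('d))"
  have "err1 g N x c (Qset \<alpha> \<gamma> m) \<le> mean_abs N c * A_norm / sqrt T"
  proof (rule err1_le[OF finite_Qset x])
    show "T \<le> rw \<alpha> \<gamma> k" if "k \<notin> Qset \<alpha> \<gamma> m" for k
      using rw_le_imp_mem_Qset[of \<alpha> \<gamma> k m] that unfolding T_def by linarith
  qed (use \<alpha> \<gamma> \<gamma>_pos in \<open>auto simp: T_def\<close>)
  also have "\<dots> = mean_abs N c * A_norm * (1 / sqrt T)"
    by simp
  also have "1 / sqrt T = 2 powr ((real CARD('d) - m) / 2)"
    unfolding T_def
    by (simp add: powr_half_sqrt_powr[symmetric] powr_minus_divide[symmetric] diff_divide_distrib)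
  also have "mean_abs N c * A_norm * 2 powr ((real CARD('d) - m) / 2)
      \<le> mean_abs N c * A_norm * (2 powr ((real CARD('d) + 1) / 4) * L powr (- a / 2))"
    using two_powr_half_diff_le_if_ge_log[OF L m] mean_abs_nonneg A_norm_nonneg
    by (intro mult_left_mono) auto
  finally show ?thesis
    by (simp add: mult.assoc)
qed

lemma err2_Qset_le_powr:
  fixes a \<eta> :: real
  assumes \<gamma>: "\<forall>j. \<gamma> j \<le> 1" and \<beta>: "0 < \<beta>" "2*\<beta>+1 \<le> 2*\<alpha>" and a: "0 \<le> a" and \<eta>: "0 < \<eta>"
  shows "\<exists>C. \<forall>(L::nat) m z W. 1 \<le> L \<longrightarrow> 0 \<le> m \<longrightarrow> m \<le> a * log 2 L + (real CARD('d) + 1) / 2 \<longrightarrow>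
    wce \<beta> \<gamma> z L \<le> ereal W \<longrightarrow>
    err2 g N x c (Qset \<alpha> \<gamma> m) z L \<le> C * real L powr ((\<eta> * real CARD('d) + a) / 2) * W"
proof (intro exI allI impI)
  define Y where "Y = (2 powr (2*\<beta>+1)) ^ CARD('d) * A_norm\<^sup>2 * (mean_abs N c)\<^sup>2
    * 3 ^ CARD('d) * (\<Prod>j\<in>UNIV. 1 / \<gamma> j)"
  define Z where "Z = Y * (a / (\<eta> * ln 2) + (real CARD('d) + 3) / 2) ^ CARD('d)
    * 2 powr ((real CARD('d) + 1) / 2)"
  fix L :: nat and m :: int and z W
  assume L: "1 \<le> L" and m: "0 \<le> m" "m \<le> a * log 2 L + (real CARD('d) + 1) / 2"
    and W: "wce \<beta> \<gamma> z L \<le> ereal W"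
  define X where "X = (2 powr (2*\<beta>+1)) ^ CARD('d) * A_norm\<^sup>2 * (mean_abs N c)\<^sup>2
    * (\<Sum>k\<in>Qset \<alpha> \<gamma> m. rw \<beta> \<gamma> k)"
  have Y: "0 \<le> Y"
    unfolding Y_def using \<gamma>_pos by (simp add: prod_nonneg less_imp_le)
  have "(\<Sum>k\<in>Qset \<alpha> \<gamma> m. rw \<beta> \<gamma> k)
      \<le> (real (nat m) + 1) ^ CARD('d) * 3 ^ CARD('d) * (\<Prod>j\<in>UNIV. 1 / \<gamma> j) * 2 powr m"
    using \<gamma> \<gamma>_pos \<beta> m by (intro sum_rw_Qset_le) auto
  then have "X \<le> (2 powr (2*\<beta>+1)) ^ CARD('d) * A_norm\<^sup>2 * (mean_abs N c)\<^sup>2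
      * ((real (nat m) + 1) ^ CARD('d) * 3 ^ CARD('d) * (\<Prod>j\<in>UNIV. 1 / \<gamma> j) * 2 powr m)"
    unfolding X_def by (intro mult_left_mono) auto
  also have "\<dots> = Y * ((real (nat m) + 1) ^ CARD('d) * 2 powr m)"
    unfolding Y_def by (simp add: mult_ac)
  also have "\<dots> \<le> Z * real L powr (\<eta> * CARD('d) + a)"
    unfolding Z_def using pow_nat_plus_one_mult_two_powr_le[of L a \<eta> m] L a \<eta> m Y
    by (auto simp: mult.assoc intro: mult_left_mono)
  finally have "sqrt X + 1 \<le> sqrt Z * real L powr ((\<eta> * CARD('d) + a) / 2) + 1"
    using L by (simp add: powr_half_sqrt_powr real_sqrt_le_mono flip: real_sqrt_mult)
  also have "\<dots> \<le> (sqrt Z + 1) * real L powr ((\<eta> * CARD('d) + a) / 2)"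
    using L \<eta> a by (simp add: distrib_right ge_one_powr_ge_zero)
  finally have M: "sqrt X + 1 \<le> (sqrt Z + 1) * real L powr ((\<eta> * CARD('d) + a) / 2)" .
  have "err2 g N x c (Qset \<alpha> \<gamma> m) z L \<le> (sqrt X + 1) * W"
    unfolding X_def using \<gamma> \<gamma>_pos \<beta> by (intro err2_le_wce finite_Qset W) auto
  also have "\<dots> \<le> (sqrt Z + 1) * real L powr ((\<eta> * CARD('d) + a) / 2) * W"
    using M order.trans[OF wce_nonneg W] by (intro mult_right_mono) auto
  finally show "err2 g N x c (Qset \<alpha> \<gamma> m) z L
      \<le> (sqrt Z + 1) * real L powr ((\<eta> * CARD('d) + a) / 2) * W" .
qed

lemma err_sum_le_powr:
  fixes \<delta> \<sigma> \<tau> \<eta> \<epsilon> W :: real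
  assumes \<gamma>: "\<forall>j. \<gamma> j \<le> 1" and x: "\<forall>n<N. x n \<in> cbox 0 One"
    and \<delta>: "0 < \<delta>" "\<delta> \<le> \<alpha> - 1" and \<sigma>: "0 < \<sigma>" "\<sigma> \<le> \<alpha> - 1/2" "\<sigma> / 2 \<le> \<epsilon>"
    and \<eta>: "0 < \<eta>" "\<eta> * real CARD('d) / 2 + \<delta> + \<tau> \<le> \<epsilon>"
  shows "\<exists>C. \<forall>(L::nat) z. 1 \<le> L \<longrightarrow>
    wce (\<alpha> - 1/2 - \<delta>) \<gamma> z L \<le> ereal (W * real L powr (- (\<alpha> - 1/2 - \<delta>) + \<tau>)) \<longrightarrow>
    (let m = \<lceil>(\<alpha> - 1/2 - \<sigma>) * log 2 (real L) + (real CARD('d) - 1) / 2\<rceil>;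
         K = Qset \<alpha> \<gamma> m
     in err1 g N x c K + err2 g N x c K z L \<le> C * real L powr (- (\<alpha> - 1/2) / 2 + \<epsilon>))"
proof -
  define a where "a = \<alpha> - 1/2 - \<sigma>"
  define \<beta> where "\<beta> = \<alpha> - 1/2 - \<delta>"
  define d where "d = real CARD('d)"
  define E where "E = - (\<alpha> - 1/2) / 2 + \<epsilon>"
  define C1 where "C1 = mean_abs N c * A_norm * 2 powr ((d + 1) / 4)"
  define mL where "mL L = \<lceil>a * log 2 (real L) + (d - 1) / 2\<rceil>" for L :: nat
  have a: "0 \<le> a" and \<beta>: "0 < \<beta>" "2*\<beta>+1 \<le> 2*\<alpha>"
    unfolding a_def \<beta>_def using \<sigma> \<delta> by auto
  obtain C2 where C2: "\<forall>(L::nat) m z W. 1 \<le> L \<longrightarrow> 0 \<le> m \<longrightarrow> m \<le> a * log 2 L + (d + 1) / 2 \<longrightarrow>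
      wce \<beta> \<gamma> z L \<le> ereal W \<longrightarrow> err2 g N x c (Qset \<alpha> \<gamma> m) z L \<le> C2 * real L powr ((\<eta> * d + a) / 2) * W"
    using err2_Qset_le_powr[OF \<gamma> \<beta> a \<eta>(1), where N=N and x=x and c=c] unfolding d_def by blast
  have "err1 g N x c (Qset \<alpha> \<gamma> (mL L)) + err2 g N x c (Qset \<alpha> \<gamma> (mL L)) z L
      \<le> (\<bar>C1\<bar> + \<bar>C2 * W\<bar>) * real L powr E"
    if L: "1 \<le> L" and W: "wce \<beta> \<gamma> z L \<le> ereal (W * real L powr (- \<beta> + \<tau>))" for L :: nat and z
  proof -
    have "1 \<le> real L" "1 \<le> d"
      using L unfolding d_def by auto
    note m_bounds = ceiling_log_bounds[OF this(1) a this(2), folded mL_def]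
    have "err1 g N x c (Qset \<alpha> \<gamma> (mL L)) \<le> C1 * real L powr (- a / 2)"
      unfolding C1_def d_def using err1_Qset_le_powr[OF x _ \<gamma> _ m_bounds(1)[unfolded d_def]] \<delta> L by auto
    also have "\<dots> \<le> \<bar>C1\<bar> * real L powr E"
      using L \<sigma> unfolding E_def a_def by (intro mult_powr_le_abs_mult_powr) (auto simp: field_simps)
    finally have err1: "err1 g N x c (Qset \<alpha> \<gamma> (mL L)) \<le> \<bar>C1\<bar> * real L powr E" .
    have "err2 g N x c (Qset \<alpha> \<gamma> (mL L)) z L
        \<le> C2 * real L powr ((\<eta> * d + a) / 2) * (W * real L powr (- \<beta> + \<tau>))"
      using C2 L m_bounds(2,3) W by blast
    also have "\<dots> = (C2 * W) * real L powr ((\<eta> * d + a) / 2 + (- \<beta> + \<tau>))"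
      by (simp only: powr_add mult_ac)
    also have "\<dots> \<le> \<bar>C2 * W\<bar> * real L powr E"
      using L \<eta>(2) \<sigma>(1) unfolding E_def a_def \<beta>_def d_def
      by (intro mult_powr_le_abs_mult_powr) (auto simp: field_simps)
    finally show ?thesis
      using err1 by (simp add: distrib_right)
  qed
  then show ?thesis
    unfolding Let_def mL_def a_def d_def \<beta>_def E_def by blast
qed

end

theorem corollary3p21:
  fixes \<alpha> \<epsilon> :: real and g :: "real^('d::{finite,linorder}) \<Rightarrow> complex"
    and \<gamma> :: "'d::{finite,linorder} \<Rightarrow> real" and N :: nat
    and x :: "nat \<Rightarrow> real^'d::{finite,linorder}" and c :: "nat \<Rightarrow> real"
  assumes "\<alpha> > 1"
    and "\<forall>j. \<gamma> j \<le> 1 \<and> \<gamma> j > 0"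
    and "\<forall>i j. i \<le> j \<longrightarrow> \<gamma> j \<le> \<gamma> i"
    and "in_A \<alpha> \<gamma> g" and "fourier_rep g"
    and "\<forall>n<N. x n \<in> cbox 0 One"
    and "\<epsilon> > 0"
  shows "\<exists>\<delta> \<sigma>. 0 < \<delta> \<and> \<delta> < \<alpha> - 1 \<and> \<sigma> > 0 \<and>
    (\<exists>C. \<forall>gv :: nat \<Rightarrow> nat^('d::{finite,linorder}).
      (\<forall>L. prime L \<longrightarrow> (\<forall>j. 1 \<le> gv L $ j \<and> gv L $ j \<le> L - 1) \<and>
         (\<forall>\<tau>. 0 < \<tau> \<and> \<tau> \<le> (\<alpha> - 1/2 - \<delta>) - 1/2 \<longrightarrow>
            wce (\<alpha> - 1/2 - \<delta>) \<gamma> (rank1_lattice L (gv L)) L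
              \<le> ereal (Cconst \<gamma> (\<alpha> - 1/2 - \<delta>) \<tau> * real L powr (- (\<alpha> - 1/2 - \<delta>) + \<tau>))))
      \<longrightarrow> (\<forall>L. prime L \<longrightarrow>
            (let m = \<lceil>(\<alpha> - 1/2 - \<sigma>) * log 2 (real L) + (real CARD('d) - 1) / 2\<rceil>;
                 K = Qset \<alpha> \<gamma> m
             in err1 g N x c K + err2 g N x c K (rank1_lattice L (gv L)) L
                \<le> C * real L powr (- (\<alpha> - 1/2) / 2 + \<epsilon>))))"
proof -
  interpret weighted_wiener \<alpha> \<gamma> g
    using assms(2,4,5) by unfold_locales auto
  have \<gamma>_le_1: "\<forall>j. \<gamma> j \<le> 1"
    using assms(2) by blast
  define \<delta> where "\<delta> = min (\<epsilon> / 4) ((\<alpha> - 1) / 2)"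
  define \<sigma> where "\<sigma> = min \<epsilon> ((\<alpha> - 1/2) / 2)"
  define \<eta> where "\<eta> = \<epsilon> / (2 * real CARD('d))"
  have \<delta>: "0 < \<delta>" "\<delta> < \<alpha> - 1" "\<delta> \<le> (\<alpha> - 1/2 - \<delta>) - 1/2" "\<delta> \<le> \<epsilon> / 4"
    unfolding \<delta>_def using assms(1,7) by (auto simp: min_def)
  have \<sigma>: "0 < \<sigma>" "\<sigma> \<le> \<alpha> - 1/2" "\<sigma> / 2 \<le> \<epsilon>"
    unfolding \<sigma>_def using assms(1,7) by (auto simp: min_def)
  have \<eta>: "0 < \<eta>" "\<eta> * real CARD('d) / 2 + \<delta> + \<delta> \<le> \<epsilon>"
    unfolding \<eta>_def using assms(7) \<delta>(4) by auto
  obtain C where C: "\<forall>(L::nat) z. 1 \<le> L \<longrightarrow>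
      wce (\<alpha> - 1/2 - \<delta>) \<gamma> z L
        \<le> ereal (Cconst \<gamma> (\<alpha> - 1/2 - \<delta>) \<delta> * real L powr (- (\<alpha> - 1/2 - \<delta>) + \<delta>)) \<longrightarrow>
      (let m = \<lceil>(\<alpha> - 1/2 - \<sigma>) * log 2 (real L) + (real CARD('d) - 1) / 2\<rceil>;
           K = Qset \<alpha> \<gamma> m
       in err1 g N x c K + err2 g N x c K z L \<le> C * real L powr (- (\<alpha> - 1/2) / 2 + \<epsilon>))"
    using err_sum_le_powr[OF \<gamma>_le_1 assms(6) \<delta>(1) less_imp_le[OF \<delta>(2)] \<sigma> \<eta>,
        where c=c and W="Cconst \<gamma> (\<alpha> - 1/2 - \<delta>) \<delta>"] by blast
  show ?thesis
    using \<delta> \<sigma>(1) C prime_ge_1_nat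
    by (intro exI[of _ \<delta>] exI[of _ \<sigma>] conjI exI[of _ C] allI impI) (assumption | metis)+
qed

end
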